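(* Let $p$ be an odd prime and $k\in\mathbb{N}$. Then $\Delta_D(H_3(\mathbb{Z}/p^k\mathbb{Z}))^*$ is disconnected if and only if $k=1$.
   Context: $H_3(\mathbb{Z}/p^k\mathbb{Z})=\langle y_1,y_2,w\mid [y_1,y_2]=w,\ y_1^{p^k}=y_2^{p^k}=w^{p^k}=[y_1,w]=[y_2,w]=e\rangle$ for an odd prime $p$. The deep commuting graph $\Delta_D(G)$ has vertex set $G$, distinct vertices adjacent iff their preimages commute in a Schur cover $\tilde G$ of $G$ (a central extension $\{e\}\to M(G)\to\tilde G\to G\to\{e\}$ with kernel contained in $Z(\tilde G)\cap[\tilde G,\tilde G]$, of maximal order; $M(G)$ the Schur multiplier). A vertex is dominant if adjacent to every other vertex; the reduced graph $\Gamma^*$ is the subgraph induced by the non-dominant vertices. *)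

theory Defs
  imports "HOL-Computational_Algebra.Primes" "HOL-Algebra.Generated_Groups"
begin

definition group_center :: "('a, 'b) monoid_scheme \<Rightarrow> 'a set" where
  "group_center T = {z \<in> carrier T. \<forall>x \<in> carrier T. z \<otimes>\<^bsub>T\<^esub> x = x \<otimes>\<^bsub>T\<^esub> z}"

definition stem_extension ::
  "('c, 'd) monoid_scheme \<Rightarrow> ('a, 'b) monoid_scheme \<Rightarrow> ('c \<Rightarrow> 'a) \<Rightarrow> bool" where
  "stem_extension T G \<pi> \<longleftrightarrow> group T \<and> \<pi> \<in> epi T G \<and>
     kernel T G \<pi> \<subseteq> group_center T \<inter> derived T (carrier T)"

(* The competing extensions range over groups with carrier in nat; every finite group
   has an isomorphic copy of that form, so this is the maximum over all finite stem extensions. *)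
definition schur_cover ::
  "('c, 'd) monoid_scheme \<Rightarrow> ('a, 'b) monoid_scheme \<Rightarrow> ('c \<Rightarrow> 'a) \<Rightarrow> bool" where
  "schur_cover T G \<pi> \<longleftrightarrow> stem_extension T G \<pi> \<and> finite (carrier T) \<and>
     (\<forall>(S :: nat monoid) \<sigma>. stem_extension S G \<sigma> \<and> finite (carrier S) \<longrightarrow>
        card (kernel S G \<sigma>) \<le> card (kernel T G \<pi>))"

(* Deep commuting graph adjacency: distinct x, y whose preimages commute in a Schur cover.
   (This is independent of the choice of Schur cover; we take the cover to range over
   groups with carrier in nat and require commuting in every such cover.) *)
definition deep_adj :: "('a, 'b) monoid_scheme \<Rightarrow> 'a \<Rightarrow> 'a \<Rightarrow> bool" where
  "deep_adj G x y \<longleftrightarrow> x \<in> carrier G \<and> y \<in> carrier G \<and> x \<noteq> y \<and>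
     (\<forall>(T :: nat monoid) \<pi>. schur_cover T G \<pi> \<longrightarrow>
        (\<forall>a \<in> carrier T. \<forall>b \<in> carrier T. \<pi> a = x \<and> \<pi> b = y \<longrightarrow>
            a \<otimes>\<^bsub>T\<^esub> b = b \<otimes>\<^bsub>T\<^esub> a))"

definition dominant_vertices :: "'a set \<Rightarrow> ('a \<Rightarrow> 'a \<Rightarrow> bool) \<Rightarrow> 'a set" where
  "dominant_vertices V E = {v \<in> V. \<forall>w \<in> V. w \<noteq> v \<longrightarrow> E v w}"

definition reduced_vertices :: "'a set \<Rightarrow> ('a \<Rightarrow> 'a \<Rightarrow> bool) \<Rightarrow> 'a set" where
  "reduced_vertices V E = V - dominant_vertices V E"

definition graph_connected :: "'a set \<Rightarrow> ('a \<Rightarrow> 'a \<Rightarrow> bool) \<Rightarrow> bool" where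
  "graph_connected V E \<longleftrightarrow> V \<noteq> {} \<and>
     (\<forall>x \<in> V. \<forall>y \<in> V. (\<lambda>u v. u \<in> V \<and> v \<in> V \<and> E u v)\<^sup>*\<^sup>* x y)"

(* Heisenberg group H_3(Z/nZ) as upper unitriangular 3x3 matrices (a,b,c) ~ [[1,a,c],[0,1,b],[0,0,1]] *)
definition heisenberg :: "int \<Rightarrow> (int \<times> int \<times> int) monoid" where
  "heisenberg n = \<lparr> carrier = {0..<n} \<times> {0..<n} \<times> {0..<n},
      monoid.mult = (\<lambda>(a, b, c) (a', b', c'). ((a + a') mod n, (b + b') mod n, (c + c' + a * b') mod n)),
      monoid.one = (0, 0, 0) \<rparr>"

end

theory Submission
  imports Defs "HOL-Library.Countable"
begin

text \<open>Let \<open>H = H\<^sub>3(\<int>/N)\<close> with \<open>N\<close> odd, let \<open>s1, s2\<close> lift the generators of \<open>H\<close> to a stem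
  extension and let \<open>w = [s1, s2]\<close>. The kernel lies in the derived subgroup, which consists of
  products \<open>w\<^sup>n u\<^sup>i v\<^sup>j\<close> with \<open>u = [w, s1]\<close>, \<open>v = [w, s2]\<close> central of order dividing \<open>N\<close>;
  hence the Schur multiplier has order at most \<open>N\<^sup>2\<close>, and an explicit extension of order
  \<open>N\<^sup>5\<close> attains this bound. In a Schur cover, the lift of a central element \<open>(0, 0, M)\<close>
  commutes with the lift of \<open>(a, b, c)\<close> when \<open>M\<close> annihilates \<open>a\<close> and \<open>b\<close>, since
  \<open>[h\<^sup>M, g] = [h, g\<^sup>M]\<close>; conversely, in the explicit cover it forces \<open>N\<close> to divide \<open>2Ma\<close> and
  \<open>2Mb\<close>. For \<open>N = p\<close> a non-trivial central element is therefore adjacent only to central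
  elements, which disconnects the reduced graph; for \<open>N = p\<^sup>k\<close> with \<open>k \<ge> 2\<close>, every reduced
  vertex reaches \<open>(0, 0, p\<^bsup>k-1\<^esup>)\<close> directly or through its \<open>p\<close>-th power.\<close>

text \<open>Writing every residue as \<open>x mod N = x + N * (- (x div N))\<close> turns an identity between
  residues into the existence of an integer multiple of \<open>N\<close>, an ideal-membership problem that
  the \<open>algebra\<close> method decides.\<close>

lemma mod_eq_div_form: "(x::int) mod N = x + N * (- (x div N))"
  by (simp add: minus_div_mult_eq_mod[symmetric] algebra_simps)

lemma mod_eqI_multiple: "(\<exists>k. x = y + N * k) \<Longrightarrow> (x::int) mod N = y mod N"
  by auto

lemma mod_eq_0I_multiple: "(\<exists>k. x = N * k) \<Longrightarrow> (x::int) mod N = 0"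
  by auto

lemma mod_eq_residueI: "0 \<le> z \<Longrightarrow> z < N \<Longrightarrow> (\<exists>k. x = z + N * k) \<Longrightarrow> (x::int) mod N = z"
  by auto

lemma residue_eq_0_if_dvd: "0 \<le> (a::int) \<Longrightarrow> a < n \<Longrightarrow> n dvd a \<Longrightarrow> a = 0"
  using zdvd_imp_le by fastforce

definition commutator :: "('a, 'b) monoid_scheme \<Rightarrow> 'a \<Rightarrow> 'a \<Rightarrow> 'a" where
  "commutator G x y = x \<otimes>\<^bsub>G\<^esub> y \<otimes>\<^bsub>G\<^esub> inv\<^bsub>G\<^esub> x \<otimes>\<^bsub>G\<^esub> inv\<^bsub>G\<^esub> y"

context group
begin

lemma mult_inv_cancel_left: "x \<in> carrier G \<Longrightarrow> y \<in> carrier G \<Longrightarrow> x \<otimes> (inv x \<otimes> y) = y"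
  by (simp add: m_assoc[symmetric])

lemma inv_mult_cancel_left: "x \<in> carrier G \<Longrightarrow> y \<in> carrier G \<Longrightarrow> inv x \<otimes> (x \<otimes> y) = y"
  by (simp add: m_assoc[symmetric])

lemma commutator_closed [simp]:
  "x \<in> carrier G \<Longrightarrow> y \<in> carrier G \<Longrightarrow> commutator G x y \<in> carrier G"
  by (simp add: commutator_def)

lemma commutator_eq_one_iff:
  assumes "x \<in> carrier G" "y \<in> carrier G"
  shows "commutator G x y = \<one> \<longleftrightarrow> x \<otimes> y = y \<otimes> x"
proof -
  have "commutator G x y = (x \<otimes> y) \<otimes> inv (y \<otimes> x)"
    using assms by (simp add: commutator_def inv_mult_group m_assoc)
  then show ?thesis
    using assms by (metis inv_closed inv_comm inv_inv m_closed r_inv inv_equality)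
qed

lemma inv_commutator:
  "x \<in> carrier G \<Longrightarrow> y \<in> carrier G \<Longrightarrow> inv (commutator G x y) = commutator G y x"
  by (simp add: commutator_def inv_mult_group m_assoc)

lemma commutator_mult_left:
  "x1 \<in> carrier G \<Longrightarrow> x2 \<in> carrier G \<Longrightarrow> y \<in> carrier G \<Longrightarrow>
   commutator G (x1 \<otimes> x2) y = x1 \<otimes> commutator G x2 y \<otimes> inv x1 \<otimes> commutator G x1 y"
  by (simp add: commutator_def inv_mult_group m_assoc mult_inv_cancel_left inv_mult_cancel_left)

lemma commutator_mult_right:
  "x \<in> carrier G \<Longrightarrow> y1 \<in> carrier G \<Longrightarrow> y2 \<in> carrier G \<Longrightarrow>
   commutator G x (y1 \<otimes> y2) = commutator G x y1 \<otimes> (y1 \<otimes> commutator G x y2 \<otimes> inv y1)"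
  by (simp add: commutator_def inv_mult_group m_assoc mult_inv_cancel_left inv_mult_cancel_left)

lemma commutator_pow_self: "x \<in> carrier G \<Longrightarrow> commutator G x (x [^] (n::nat)) = \<one>"
  by (simp add: commutator_eq_one_iff nat_pow_comm[of x 1 n, simplified])

lemma conj_eq_commutator_mult:
  "g \<in> carrier G \<Longrightarrow> x \<in> carrier G \<Longrightarrow> g \<otimes> x \<otimes> inv g = commutator G g x \<otimes> x"
  by (simp add: commutator_def m_assoc)

lemma conj_commuting:
  "g \<in> carrier G \<Longrightarrow> c \<in> carrier G \<Longrightarrow> c \<otimes> g = g \<otimes> c \<Longrightarrow> g \<otimes> c \<otimes> inv g = c"
  by (metis m_assoc inv_closed r_inv r_one)

lemma conj_mult:
  "g \<in> carrier G \<Longrightarrow> x \<in> carrier G \<Longrightarrow> y \<in> carrier G \<Longrightarrow>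
   g \<otimes> (x \<otimes> y) \<otimes> inv g = (g \<otimes> x \<otimes> inv g) \<otimes> (g \<otimes> y \<otimes> inv g)"
  by (simp add: m_assoc mult_inv_cancel_left inv_mult_cancel_left)

lemma conj_nat_pow:
  "g \<in> carrier G \<Longrightarrow> x \<in> carrier G \<Longrightarrow> g \<otimes> (x [^] (n::nat)) \<otimes> inv g = (g \<otimes> x \<otimes> inv g) [^] n"
  by (induction n) (simp_all add: conj_mult)

lemma inv_eq_pow_pred:
  assumes "x \<in> carrier G" "x [^] (n::nat) = \<one>" "n \<ge> 1"
  shows "inv x = x [^] (n - 1)"
proof -
  have "x \<otimes> x [^] (n - 1) = \<one>"
    using assms nat_pow_Suc2[of x "n - 1"] by simp
  then show ?thesis
    using assms inv_equality[of "x [^] (n - 1)" x] inv_comm[of x "x [^] (n - 1)"] by simp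
qed

lemma nat_pow_mod_order:
  assumes "x \<in> carrier G" "x [^] (n::nat) = \<one>"
  shows "x [^] (m::nat) = x [^] (m mod n)"
proof -
  have "x [^] m = x [^] (n * (m div n) + m mod n)" by simp
  also have "\<dots> = (x [^] n) [^] (m div n) \<otimes> x [^] (m mod n)"
    using assms(1) by (simp only: nat_pow_mult nat_pow_pow)
  finally show ?thesis using assms by simp
qed

end

lemma (in group_hom) commutator_image:
  "x \<in> carrier G \<Longrightarrow> y \<in> carrier G \<Longrightarrow> h (commutator G x y) = commutator H (h x) (h y)"
  by (simp add: commutator_def)

section \<open>The Heisenberg group modulo N\<close>

lemma heisenberg_simps:
  "carrier (heisenberg N) = {0..<N} \<times> {0..<N} \<times> {0..<N}"
  "\<one>\<^bsub>heisenberg N\<^esub> = (0, 0, 0)"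
  "(a, b, c) \<otimes>\<^bsub>heisenberg N\<^esub> (a', b', c') = ((a + a') mod N, (b + b') mod N, (c + c' + a * b') mod N)"
  by (simp_all add: heisenberg_def)

lemma heisenberg_inverse:
  "((- a) mod N, (- b) mod N, (a * b - c) mod N) \<otimes>\<^bsub>heisenberg N\<^esub> (a, b, c) = \<one>\<^bsub>heisenberg N\<^esub>"
  unfolding heisenberg_simps
  by (simp add: mod_simps, rule mod_eq_0I_multiple, simp only: mod_eq_div_form[of _ N], algebra)

lemma heisenberg_group:
  assumes "(N::int) > 0"
  shows "group (heisenberg N)"
proof (rule groupI)
  fix x y assume "x \<in> carrier (heisenberg N)" "y \<in> carrier (heisenberg N)"
  then show "x \<otimes>\<^bsub>heisenberg N\<^esub> y \<in> carrier (heisenberg N)"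
    using assms by (cases x, cases y) (auto simp: heisenberg_simps)
next
  show "\<one>\<^bsub>heisenberg N\<^esub> \<in> carrier (heisenberg N)"
    using assms by (simp add: heisenberg_simps)
next
  fix x y z :: "int \<times> int \<times> int"
  obtain a b c a' b' c' a'' b'' c'' where xyz: "x = (a, b, c)" "y = (a', b', c')" "z = (a'', b'', c'')"
    by (cases x, cases y, cases z) auto
  show "x \<otimes>\<^bsub>heisenberg N\<^esub> y \<otimes>\<^bsub>heisenberg N\<^esub> z = x \<otimes>\<^bsub>heisenberg N\<^esub> (y \<otimes>\<^bsub>heisenberg N\<^esub> z)"
    unfolding xyz
    by (simp add: heisenberg_simps mod_simps add.assoc,
        rule mod_eqI_multiple, simp only: mod_eq_div_form[of _ N], algebra)
next
  fix x assume "x \<in> carrier (heisenberg N)"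
  then show "\<one>\<^bsub>heisenberg N\<^esub> \<otimes>\<^bsub>heisenberg N\<^esub> x = x"
    by (cases x) (auto simp: heisenberg_simps)
next
  fix x assume "x \<in> carrier (heisenberg N)"
  obtain a b c where "x = (a, b, c)" by (cases x)
  moreover have "((- a) mod N, (- b) mod N, (a * b - c) mod N) \<in> carrier (heisenberg N)"
    using assms by (simp add: heisenberg_simps)
  ultimately show "\<exists>y\<in>carrier (heisenberg N). y \<otimes>\<^bsub>heisenberg N\<^esub> x = \<one>\<^bsub>heisenberg N\<^esub>"
    using heisenberg_inverse by blast
qed

lemma heisenberg_inv:
  assumes "(N::int) > 0" and "(a, b, c) \<in> carrier (heisenberg N)"
  shows "inv\<^bsub>heisenberg N\<^esub> (a, b, c) = ((- a) mod N, (- b) mod N, (a * b - c) mod N)"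
proof -
  interpret group "heisenberg N" using heisenberg_group[OF assms(1)] .
  show ?thesis
    using inv_equality[OF heisenberg_inverse assms(2)] assms(1) by (simp add: heisenberg_simps)
qed

lemma heisenberg_pow_fst_snd:
  "fst (x [^]\<^bsub>heisenberg N\<^esub> (n::nat)) = (int n * fst x) mod N \<and>
   fst (snd (x [^]\<^bsub>heisenberg N\<^esub> n)) = (int n * fst (snd x)) mod N"
proof (induction n)
  case 0
  then show ?case by (simp add: heisenberg_simps)
next
  case (Suc n)
  obtain a b c a' b' c' where "x = (a, b, c)" "x [^]\<^bsub>heisenberg N\<^esub> n = (a', b', c')"
    by (cases x, cases "x [^]\<^bsub>heisenberg N\<^esub> n") auto
  with Suc show ?case by (simp add: heisenberg_simps mod_simps algebra_simps)
qed

lemma heisenberg_pow_generators: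
  "(1, 0, 0) [^]\<^bsub>heisenberg N\<^esub> (n::nat) = (int n mod N, 0, 0)"
  "(0, 1, 0) [^]\<^bsub>heisenberg N\<^esub> n = (0, int n mod N, 0)"
  "(0, 0, 1) [^]\<^bsub>heisenberg N\<^esub> n = (0, 0, int n mod N)"
  by (induction n) (simp_all add: heisenberg_simps mod_simps algebra_simps)

lemma heisenberg_central:
  "y \<in> carrier (heisenberg N) \<Longrightarrow> (0, 0, c) \<otimes>\<^bsub>heisenberg N\<^esub> y = y \<otimes>\<^bsub>heisenberg N\<^esub> (0, 0, c)"
  by (cases y) (auto simp: heisenberg_simps algebra_simps)

lemma heisenberg_commute_generators:
  assumes "(a, b, c) \<in> carrier (heisenberg N)"
  shows "(a, b, c) \<otimes>\<^bsub>heisenberg N\<^esub> (1, 0, 0) = (1, 0, 0) \<otimes>\<^bsub>heisenberg N\<^esub> (a, b, c) \<Longrightarrow> b = 0"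
    and "(a, b, c) \<otimes>\<^bsub>heisenberg N\<^esub> (0, 1, 0) = (0, 1, 0) \<otimes>\<^bsub>heisenberg N\<^esub> (a, b, c) \<Longrightarrow> a = 0"
proof -
  have carrier: "0 \<le> a" "a < N" "0 \<le> b" "b < N" "0 \<le> c" "c < N"
    using assms by (auto simp: heisenberg_simps)
  show "b = 0" if "(a, b, c) \<otimes>\<^bsub>heisenberg N\<^esub> (1, 0, 0) = (1, 0, 0) \<otimes>\<^bsub>heisenberg N\<^esub> (a, b, c)"
  proof -
    have "(b + c) mod N = c mod N" using that carrier by (simp add: heisenberg_simps add.commute)
    then have "N dvd b" by (simp add: mod_eq_dvd_iff)
    then show ?thesis using carrier residue_eq_0_if_dvd by blast
  qed
  show "a = 0" if "(a, b, c) \<otimes>\<^bsub>heisenberg N\<^esub> (0, 1, 0) = (0, 1, 0) \<otimes>\<^bsub>heisenberg N\<^esub> (a, b, c)"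
  proof -
    have "(a + c) mod N = c mod N" using that carrier by (simp add: heisenberg_simps add.commute)
    then have "N dvd a" by (simp add: mod_eq_dvd_iff)
    then show ?thesis using carrier residue_eq_0_if_dvd by blast
  qed
qed

lemma heisenberg_commutator_generators:
  assumes "(N::int) > 1"
  shows "commutator (heisenberg N) (1, 0, 0) (0, 1, 0) = (0, 0, 1)"
proof -
  have "(1, 0, 0) \<in> carrier (heisenberg N)" "(0, 1, 0) \<in> carrier (heisenberg N)"
    using assms by (auto simp: heisenberg_simps)
  then show ?thesis
    using assms heisenberg_inv by (simp add: commutator_def heisenberg_simps mod_simps zmod_zminus1_eq_if)
qed

section \<open>Stem extensions of the Heisenberg group\<close>

locale heisenberg_stem = S?: group S for S (structure) +
  fixes \<pi> :: "'a \<Rightarrow> int \<times> int \<times> int" and N :: int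
  assumes N_gt_1: "N > 1"
    and stem: "stem_extension S (heisenberg N) \<pi>"
begin

abbreviation "H \<equiv> heisenberg N"
abbreviation "K \<equiv> kernel S H \<pi>"

sublocale \<pi>: group_hom S H \<pi>
  using stem heisenberg_group[of N] N_gt_1
  by (simp add: group_hom_def group_hom_axioms_def stem_extension_def epi_def S.group_axioms)

lemma kernel_iff: "x \<in> K \<longleftrightarrow> x \<in> carrier S \<and> \<pi> x = (0, 0, 0)"
  by (simp add: kernel_def heisenberg_simps)

lemma kernel_commute: "k \<in> K \<Longrightarrow> y \<in> carrier S \<Longrightarrow> k \<otimes> y = y \<otimes> k"
  using stem by (auto simp: stem_extension_def group_center_def)

lemma kernel_carrier: "k \<in> K \<Longrightarrow> k \<in> carrier S"
  by (simp add: kernel_iff)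

lemma kernel_mult: "a \<in> K \<Longrightarrow> b \<in> K \<Longrightarrow> a \<otimes> b \<in> K"
  by (rule subgroup.m_closed[OF \<pi>.subgroup_kernel])

lemma kernel_inv: "a \<in> K \<Longrightarrow> inv a \<in> K"
  by (rule subgroup.m_inv_closed[OF \<pi>.subgroup_kernel])

lemma kernel_nat_pow: "a \<in> K \<Longrightarrow> a [^] (n::nat) \<in> K"
  by (induction n) (auto simp: kernel_mult subgroup.one_closed[OF \<pi>.subgroup_kernel])

lemma kernel_conj: "k \<in> K \<Longrightarrow> g \<in> carrier S \<Longrightarrow> g \<otimes> k \<otimes> inv g = k"
  using conj_commuting kernel_commute kernel_carrier by metis

lemma lift_exists:
  assumes "x \<in> carrier H"
  shows "\<exists>s\<in>carrier S. \<pi> s = x"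
proof -
  have "\<pi> ` carrier S = carrier H" using stem by (simp add: stem_extension_def epi_def)
  then show ?thesis using assms by (metis imageE)
qed

lemma same_image_imp_kernel_coset:
  assumes "y \<in> carrier S" "s \<in> carrier S" "\<pi> s = \<pi> y"
  shows "\<exists>k\<in>K. y = s \<otimes> k"
proof -
  have "\<pi> (inv s \<otimes> y) = \<one>\<^bsub>H\<^esub>"
    using assms by (simp add: group.l_inv[OF \<pi>.H.group_axioms])
  then have "inv s \<otimes> y \<in> K" using assms by (simp add: kernel_def)
  moreover have "y = s \<otimes> (inv s \<otimes> y)" using assms by (simp add: mult_inv_cancel_left)
  ultimately show ?thesis by blast
qed

lemma commutator_kernel_right: "k \<in> K \<Longrightarrow> x \<in> carrier S \<Longrightarrow> commutator S x k = \<one>"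
  using kernel_commute kernel_carrier commutator_eq_one_iff by metis

lemma commutator_kernel_left: "k \<in> K \<Longrightarrow> x \<in> carrier S \<Longrightarrow> commutator S k x = \<one>"
  using kernel_commute kernel_carrier commutator_eq_one_iff by metis

lemma commutator_mult_kernel_left:
  "k \<in> K \<Longrightarrow> s \<in> carrier S \<Longrightarrow> y \<in> carrier S \<Longrightarrow> commutator S (s \<otimes> k) y = commutator S s y"
  using commutator_mult_left[of s k y] commutator_kernel_left[of k y] kernel_carrier by simp

lemma commutator_mult_kernel_right:
  "k \<in> K \<Longrightarrow> s \<in> carrier S \<Longrightarrow> y \<in> carrier S \<Longrightarrow> commutator S y (s \<otimes> k) = commutator S y s"
  using commutator_mult_right[of y s k] commutator_kernel_right[of k y] kernel_carrier
  by (simp add: m_assoc)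

text \<open>The centre of the Heisenberg group is \<open>{(0, 0, c)}\<close>.\<close>

definition over_center :: "'a \<Rightarrow> bool" where
  "over_center x \<longleftrightarrow> x \<in> carrier S \<and> fst (\<pi> x) = 0 \<and> fst (snd (\<pi> x)) = 0"

lemma over_center_image: "over_center x \<Longrightarrow> \<pi> x = (0, 0, snd (snd (\<pi> x)))"
  unfolding over_center_def by (metis prod.collapse)

lemma kernel_over_center: "k \<in> K \<Longrightarrow> over_center k"
  by (simp add: kernel_iff over_center_def)

lemma over_center_mult:
  assumes "over_center x" "over_center y"
  shows "over_center (x \<otimes> y)"
proof -
  have "\<pi> (x \<otimes> y) = (0, 0, snd (snd (\<pi> x))) \<otimes>\<^bsub>H\<^esub> (0, 0, snd (snd (\<pi> y)))"
    using assms over_center_image[OF assms(1)] over_center_image[OF assms(2)]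
    by (simp add: over_center_def)
  then show ?thesis using assms by (simp add: over_center_def heisenberg_simps)
qed

lemma over_center_nat_pow: "over_center x \<Longrightarrow> over_center (x [^] (n::nat))"
  using heisenberg_pow_fst_snd[where x = "\<pi> x" and N = N and n = n] by (simp add: over_center_def \<pi>.hom_nat_pow)

lemma commutator_over_center_in_kernel:
  assumes "over_center x" "y \<in> carrier S"
  shows "commutator S x y \<in> K"
proof -
  have "commutator H (\<pi> x) (\<pi> y) = \<one>\<^bsub>H\<^esub>"
    using assms heisenberg_central[of "\<pi> y" N "snd (snd (\<pi> x))"] over_center_image[OF assms(1)]
    by (simp add: group.commutator_eq_one_iff[OF \<pi>.H.group_axioms] over_center_def)
  then show ?thesis
    using assms by (simp add: kernel_def \<pi>.commutator_image over_center_def)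
qed

text \<open>Since commutators with elements over the centre are central, they are bilinear.\<close>

lemma commutator_over_center_mult_right:
  assumes "over_center x" "y1 \<in> carrier S" "y2 \<in> carrier S"
  shows "commutator S x (y1 \<otimes> y2) = commutator S x y1 \<otimes> commutator S x y2"
  using commutator_mult_right[of x y1 y2] kernel_conj[OF commutator_over_center_in_kernel[OF assms(1,3)] assms(2)]
    assms by (simp add: over_center_def)

lemma commutator_over_center_pow_right:
  assumes "over_center x" "y \<in> carrier S"
  shows "commutator S x (y [^] (n::nat)) = commutator S x y [^] n"
proof (induction n)
  case 0
  then show ?case using assms by (simp add: commutator_def over_center_def)
next
  case (Suc n)
  then show ?case
    using commutator_over_center_mult_right[OF assms(1) nat_pow_closed[OF assms(2)] assms(2)] by simp
qed

lemma commutator_over_center_pow_left: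
  assumes "over_center x" "y \<in> carrier S"
  shows "commutator S (x [^] (n::nat)) y = commutator S x y [^] n"
proof (induction n)
  case 0
  then show ?case using assms by (simp add: commutator_def over_center_def)
next
  case (Suc n)
  have x: "x \<in> carrier S" using assms(1) by (simp add: over_center_def)
  have "commutator S (x [^] Suc n) y = x [^] n \<otimes> commutator S x y \<otimes> inv (x [^] n) \<otimes> commutator S (x [^] n) y"
    using commutator_mult_left x assms by simp
  also have "\<dots> = commutator S x y \<otimes> commutator S x y [^] n"
    using kernel_conj[OF commutator_over_center_in_kernel[OF assms], of "x [^] n"] x Suc by simp
  finally show ?case using nat_pow_Suc2 x assms by simp
qed

lemma over_center_eq_pow_mult_kernel:
  assumes "h \<in> carrier S" "\<pi> h = (0, 0, 1)" "over_center x"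
  shows "\<exists>n k. k \<in> K \<and> x = h [^] (n::nat) \<otimes> k"
proof -
  obtain c where c: "\<pi> x = (0, 0, c)" using over_center_image[OF assms(3)] by blast
  have "0 \<le> c" "c < N"
    using \<pi>.hom_closed[of x] c assms(3) by (auto simp: heisenberg_simps over_center_def)
  then obtain n :: nat where "c = int n" "int n mod N = c" by (metis nonneg_int_cases mod_pos_pos_trivial)
  then have "\<pi> (h [^] n) = \<pi> x"
    using assms c by (simp add: \<pi>.hom_nat_pow heisenberg_pow_generators)
  then show ?thesis
    using same_image_imp_kernel_coset[of x "h [^] n"] assms by (auto simp: over_center_def)
qed

lemma lifts_commute_if_power:
  assumes "a \<in> carrier S" "b \<in> carrier S" "\<pi> b = \<pi> a [^]\<^bsub>H\<^esub> (n::nat)"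
  shows "a \<otimes> b = b \<otimes> a"
proof -
  obtain k where "k \<in> K" "b = a [^] n \<otimes> k"
    using same_image_imp_kernel_coset[of b "a [^] n"] assms by (auto simp: \<pi>.hom_nat_pow)
  then have "commutator S a b = \<one>"
    using assms commutator_mult_kernel_right commutator_pow_self by simp
  then show ?thesis using assms commutator_eq_one_iff by blast
qed

text \<open>If \<open>\<pi> h = (0, 0, 1)\<close> then \<open>[h\<^sup>M, g] = [h, g]\<^sup>M = [h, g\<^sup>M]\<close>, and when \<open>M\<close> kills the
  non-central coordinates of \<open>\<pi> g\<close>, the element \<open>g\<^sup>M\<close> is a power of \<open>h\<close> up to the kernel.\<close>

lemma lifts_commute_if_central_power:
  assumes h: "h \<in> carrier S" and g: "g \<in> carrier S"
    and h_image: "\<pi> h = (0, 0, int M mod N)" and g_image: "\<pi> g = (a, b, c)"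
    and "(int M * a) mod N = 0" and "(int M * b) mod N = 0"
  shows "h \<otimes> g = g \<otimes> h"
proof -
  have "(0, 0, 1) \<in> carrier H" using N_gt_1 by (simp add: heisenberg_simps)
  then obtain h0 where h0: "h0 \<in> carrier S" "\<pi> h0 = (0, 0, 1)" using lift_exists by blast
  then have h0_center: "over_center h0" by (simp add: over_center_def)
  have "\<pi> (h0 [^] M) = \<pi> h"
    using h0 h_image by (simp add: \<pi>.hom_nat_pow heisenberg_pow_generators)
  then obtain k where "k \<in> K" "h = h0 [^] M \<otimes> k"
    using same_image_imp_kernel_coset[OF h, of "h0 [^] M"] h0 by auto
  then have "commutator S h g = commutator S h0 (g [^] M)"
    using commutator_mult_kernel_left commutator_over_center_pow_left[OF h0_center g]
      commutator_over_center_pow_right[OF h0_center g] h0 g by simp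
  moreover have "over_center (g [^] M)"
    using heisenberg_pow_fst_snd[where x = "\<pi> g" and N = N and n = M] g g_image assms(5,6)
    by (simp add: over_center_def \<pi>.hom_nat_pow)
  then obtain n k' where "k' \<in> K" "g [^] M = h0 [^] (n::nat) \<otimes> k'"
    using over_center_eq_pow_mult_kernel h0 by blast
  then have "commutator S h0 (g [^] M) = \<one>"
    using commutator_mult_kernel_right commutator_pow_self h0 by simp
  ultimately show ?thesis using commutator_eq_one_iff h g by simp
qed

end

section \<open>The Schur multiplier of the Heisenberg group has order at most N squared\<close>

locale heisenberg_stem_generators = heisenberg_stem +
  fixes s1 s2
  assumes s1_carrier: "s1 \<in> carrier S" and s2_carrier: "s2 \<in> carrier S"
    and s1_image: "\<pi> s1 = (1, 0, 0)" and s2_image: "\<pi> s2 = (0, 1, 0)"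
begin

definition w :: 'a where "w = commutator S s1 s2"
definition u :: 'a where "u = commutator S w s1"
definition v :: 'a where "v = commutator S w s2"
definition U :: "'a set" where "U = {u [^] (i::nat) \<otimes> v [^] (j::nat) | i j. True}"
definition W :: "'a set" where "W = {w [^] (n::nat) \<otimes> q | n q. q \<in> U}"

lemma w_carrier [simp]: "w \<in> carrier S"
  using s1_carrier s2_carrier by (simp add: w_def)

lemma w_image: "\<pi> w = (0, 0, 1)"
  using heisenberg_commutator_generators[OF N_gt_1] s1_carrier s2_carrier s1_image s2_image
  by (simp add: w_def \<pi>.commutator_image)

lemma w_over_center: "over_center w"
  using w_image by (simp add: over_center_def)

lemma u_kernel: "u \<in> K"
  using commutator_over_center_in_kernel[OF w_over_center s1_carrier] by (simp add: u_def)

lemma v_kernel: "v \<in> K"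
  using commutator_over_center_in_kernel[OF w_over_center s2_carrier] by (simp add: v_def)

lemma u_carrier [simp]: "u \<in> carrier S" and v_carrier [simp]: "v \<in> carrier S"
  using u_kernel v_kernel kernel_carrier by blast+

lemma generators_pow_N_kernel: "s1 [^] nat N \<in> K" "s2 [^] nat N \<in> K"
proof -
  have "int (nat N) mod N = 0" using N_gt_1 by simp
  moreover have "\<pi> (s1 [^] nat N) = (1, 0, 0) [^]\<^bsub>H\<^esub> nat N" "\<pi> (s2 [^] nat N) = (0, 1, 0) [^]\<^bsub>H\<^esub> nat N"
    using s1_carrier s2_carrier s1_image s2_image by (simp_all only: \<pi>.hom_nat_pow)
  ultimately show "s1 [^] nat N \<in> K" "s2 [^] nat N \<in> K"
    using s1_carrier s2_carrier by (simp_all add: kernel_iff heisenberg_pow_generators)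
qed

lemma u_pow_N: "u [^] nat N = \<one>" and v_pow_N: "v [^] nat N = \<one>"
  using commutator_over_center_pow_right[OF w_over_center s1_carrier, of "nat N"]
    commutator_over_center_pow_right[OF w_over_center s2_carrier, of "nat N"]
    commutator_kernel_right[OF generators_pow_N_kernel(1)] commutator_kernel_right[OF generators_pow_N_kernel(2)]
  by (simp_all add: u_def v_def)

lemma carrier_decomp:
  assumes y: "y \<in> carrier S"
  shows "\<exists>a b c k. k \<in> K \<and> y = s1 [^] (a::nat) \<otimes> s2 [^] (b::nat) \<otimes> w [^] (c::nat) \<otimes> k"
proof -
  obtain A B C where y_image: "\<pi> y = (A, B, C)" by (cases "\<pi> y")
  have range: "0 \<le> A" "A < N" "0 \<le> B" "B < N" "0 \<le> C" "C < N"
    using \<pi>.hom_closed[OF y] y_image by (auto simp: heisenberg_simps)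
  obtain a b c :: nat where abc: "A = int a" "B = int b" "(C - A * B) mod N = int c"
    using range N_gt_1 nonneg_int_cases[of A] nonneg_int_cases[of B] nonneg_int_cases[of "(C - A * B) mod N"]
    by (metis pos_mod_sign less_trans zero_less_one)
  let ?s = "s1 [^] a \<otimes> s2 [^] b \<otimes> w [^] c"
  have "\<pi> ?s = (int a mod N, 0, 0) \<otimes>\<^bsub>H\<^esub> (0, int b mod N, 0) \<otimes>\<^bsub>H\<^esub> (0, 0, int c mod N)"
    using s1_carrier s2_carrier s1_image s2_image w_image
    by (simp add: \<pi>.hom_nat_pow heisenberg_pow_generators)
  also have "\<dots> = (A, B, C)"
  proof -
    have "((A * B) mod N + (C - A * B) mod N) mod N = C mod N"
      by (rule mod_eqI_multiple, simp only: mod_eq_div_form[of _ N], algebra)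
    moreover have "int c mod N = int c" using abc(3) by (metis mod_mod_trivial)
    ultimately show ?thesis using range abc by (simp add: heisenberg_simps)
  qed
  finally obtain k where "k \<in> K" "y = ?s \<otimes> k"
    using same_image_imp_kernel_coset[OF y, of ?s] y_image s1_carrier s2_carrier by auto
  then show ?thesis by blast
qed

lemma U_kernel: "q \<in> U \<Longrightarrow> q \<in> K"
  using u_kernel v_kernel by (auto simp: U_def intro!: kernel_mult kernel_nat_pow)

lemma U_carrier: "q \<in> U \<Longrightarrow> q \<in> carrier S"
  using U_kernel kernel_carrier by blast

lemma U_commute: "q \<in> U \<Longrightarrow> y \<in> carrier S \<Longrightarrow> q \<otimes> y = y \<otimes> q"
  using U_kernel kernel_commute by blast

lemma one_in_U: "\<one> \<in> U"
  unfolding U_def by (rule CollectI, rule exI[of _ 0], rule exI[of _ 0]) simp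

lemma U_mult:
  assumes "q \<in> U" "q' \<in> U"
  shows "q \<otimes> q' \<in> U"
proof -
  obtain i j i' j' where q: "q = u [^] (i::nat) \<otimes> v [^] (j::nat)" "q' = u [^] (i'::nat) \<otimes> v [^] (j'::nat)"
    using assms by (auto simp: U_def)
  have "q \<otimes> q' = u [^] i \<otimes> (v [^] j \<otimes> u [^] i') \<otimes> v [^] j'"
    unfolding q by (simp add: m_assoc)
  also have "\<dots> = u [^] i \<otimes> (u [^] i' \<otimes> v [^] j) \<otimes> v [^] j'"
    using kernel_commute[OF kernel_nat_pow[OF u_kernel, of i'], of "v [^] j"] by simp
  also have "\<dots> = u [^] (i + i') \<otimes> v [^] (j + j')"
    by (simp add: m_assoc nat_pow_mult[symmetric])
  finally show ?thesis by (auto simp: U_def)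
qed

lemma U_nat_pow: "q \<in> U \<Longrightarrow> q [^] (n::nat) \<in> U"
  by (induction n) (auto simp: one_in_U U_mult)

lemma U_inv:
  assumes "q \<in> U"
  shows "inv q \<in> U"
proof -
  obtain i j where q: "q = u [^] (i::nat) \<otimes> v [^] (j::nat)" using assms by (auto simp: U_def)
  have "inv u = u [^] (nat N - 1)" "inv v = v [^] (nat N - 1)"
    using inv_eq_pow_pred u_pow_N v_pow_N N_gt_1 by simp_all
  moreover have "inv q = inv u [^] i \<otimes> inv v [^] j"
    using kernel_commute[OF kernel_nat_pow[OF kernel_inv[OF u_kernel]], of "inv v [^] j" i]
    by (simp add: q inv_mult_group nat_pow_inv)
  ultimately have "inv q = u [^] ((nat N - 1) * i) \<otimes> v [^] ((nat N - 1) * j)"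
    by (simp add: nat_pow_pow)
  then show ?thesis by (auto simp: U_def)
qed

lemma U_subset_bounded_powers: "U \<subseteq> (\<lambda>(i, j). u [^] i \<otimes> v [^] j) ` ({..<nat N} \<times> {..<nat N})"
proof
  fix q assume "q \<in> U"
  then obtain i j where "q = u [^] (i::nat) \<otimes> v [^] (j::nat)" by (auto simp: U_def)
  then have "q = (\<lambda>(i, j). u [^] i \<otimes> v [^] j) (i mod nat N, j mod nat N)"
    using nat_pow_mod_order[OF u_carrier u_pow_N, of i] nat_pow_mod_order[OF v_carrier v_pow_N, of j]
    by (simp only: case_prod_conv)
  moreover have "(i mod nat N, j mod nat N) \<in> {..<nat N} \<times> {..<nat N}" using N_gt_1 by simp
  ultimately show "q \<in> (\<lambda>(i, j). u [^] i \<otimes> v [^] j) ` ({..<nat N} \<times> {..<nat N})"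
    by (rule rev_image_eqI[rotated])
qed

lemma commutator_w_in_U:
  assumes y: "y \<in> carrier S"
  shows "commutator S w y \<in> U"
proof -
  obtain a b c k where k: "k \<in> K" and y_eq: "y = s1 [^] (a::nat) \<otimes> s2 [^] (b::nat) \<otimes> w [^] (c::nat) \<otimes> k"
    using carrier_decomp[OF y] by blast
  have "commutator S w y
      = commutator S w (s1 [^] a) \<otimes> commutator S w (s2 [^] b) \<otimes> commutator S w (w [^] c) \<otimes> commutator S w k"
    unfolding y_eq using s1_carrier s2_carrier k kernel_carrier
    by (simp add: commutator_over_center_mult_right[OF w_over_center])
  also have "\<dots> = u [^] a \<otimes> v [^] b"
    using commutator_over_center_pow_right[OF w_over_center] commutator_pow_self[OF w_carrier]
      commutator_kernel_right[OF k w_carrier] s1_carrier s2_carrier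
    by (simp add: u_def[symmetric] v_def[symmetric])
  finally show ?thesis by (auto simp: U_def)
qed

lemma commutator_over_center_in_U:
  assumes d: "over_center d" and y: "y \<in> carrier S"
  shows "commutator S d y \<in> U" "commutator S y d \<in> U"
proof -
  obtain n k where "k \<in> K" "d = w [^] (n::nat) \<otimes> k"
    using over_center_eq_pow_mult_kernel[OF w_carrier w_image d] by blast
  then have "commutator S d y = commutator S w y [^] n"
    using commutator_mult_kernel_left commutator_over_center_pow_left[OF w_over_center y] y by simp
  then show du: "commutator S d y \<in> U"
    using U_nat_pow[OF commutator_w_in_U[OF y]] by simp
  show "commutator S y d \<in> U"
    using inv_commutator[of d y] U_inv[OF du] d y by (simp add: over_center_def)
qed

text \<open>Since \<open>s1\<^sup>N\<close> lies in the central kernel, \<open>[s1\<^sup>N, s2] = 1\<close>; expanding this commutator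
  shows that \<open>w\<^sup>N\<close> is a power of \<open>u\<close>.\<close>

lemma commutator_s1_pow_s2: "\<exists>m::nat. commutator S (s1 [^] (n::nat)) s2 = w [^] n \<otimes> inv u [^] m"
proof (induction n)
  case 0
  then show ?case using s2_carrier by (intro exI[of _ 0]) (simp add: commutator_def)
next
  case (Suc n)
  then obtain m :: nat where m: "commutator S (s1 [^] n) s2 = w [^] n \<otimes> inv u [^] m" by blast
  let ?c = "inv u"
  have c_kernel: "?c \<in> K" using kernel_inv[OF u_kernel] .
  have c_pow_commute: "?c [^] i \<otimes> x = x \<otimes> ?c [^] i" if "x \<in> carrier S" for i :: nat and x
    using kernel_commute[OF kernel_nat_pow[OF c_kernel] that] .
  have conj_w: "s1 \<otimes> w \<otimes> inv s1 = ?c \<otimes> w"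
    using conj_eq_commutator_mult[OF s1_carrier w_carrier] inv_commutator[OF w_carrier s1_carrier]
    by (simp add: u_def)
  have "commutator S (s1 [^] Suc n) s2 = commutator S (s1 \<otimes> s1 [^] n) s2"
    using nat_pow_Suc2[OF s1_carrier] by simp
  also have "\<dots> = s1 \<otimes> (w [^] n \<otimes> ?c [^] m) \<otimes> inv s1 \<otimes> w"
    using commutator_mult_left s1_carrier s2_carrier by (simp add: m w_def)
  also have "\<dots> = (s1 \<otimes> w [^] n \<otimes> inv s1) \<otimes> (s1 \<otimes> ?c [^] m \<otimes> inv s1) \<otimes> w"
    using conj_mult[OF s1_carrier, of "w [^] n" "?c [^] m"] by simp
  also have "\<dots> = (?c \<otimes> w) [^] n \<otimes> ?c [^] m \<otimes> w"
    using conj_nat_pow[OF s1_carrier w_carrier, of n] conj_w kernel_conj[OF kernel_nat_pow[OF c_kernel] s1_carrier]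
    by simp
  also have "\<dots> = ?c [^] n \<otimes> w [^] n \<otimes> ?c [^] m \<otimes> w"
    using pow_mult_distrib[of ?c w n] kernel_commute[OF c_kernel w_carrier] by simp
  also have "\<dots> = w [^] n \<otimes> w \<otimes> (?c [^] n \<otimes> ?c [^] m)"
    using c_pow_commute[of "w [^] n" n] c_pow_commute[of w m] c_pow_commute[of w n]
    by (simp add: m_assoc) (metis c_pow_commute inv_closed m_assoc nat_pow_closed u_carrier w_carrier)
  also have "\<dots> = w [^] Suc n \<otimes> ?c [^] (n + m)"
    by (simp add: nat_pow_mult)
  finally show ?case by blast
qed

lemma w_pow_N_in_U: "w [^] nat N \<in> U"
proof -
  obtain m :: nat where "commutator S (s1 [^] nat N) s2 = w [^] nat N \<otimes> inv u [^] m"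
    using commutator_s1_pow_s2 by blast
  then have "w [^] nat N \<otimes> inv u [^] m = \<one>"
    using commutator_kernel_left[OF generators_pow_N_kernel(1) s2_carrier] by simp
  then have "w [^] nat N = u [^] m \<otimes> v [^] (0::nat)"
    using inv_equality[of "w [^] nat N" "inv u [^] m"] by (simp add: inv_comm nat_pow_inv[symmetric])
  then show ?thesis unfolding U_def by blast
qed

lemma U_subset_W: "U \<subseteq> W"
  using U_carrier by (force simp: W_def intro: exI[of _ 0])

lemma W_carrier: "x \<in> W \<Longrightarrow> x \<in> carrier S"
  using U_carrier by (auto simp: W_def)

lemma W_mult:
  assumes "x \<in> W" "y \<in> W"
  shows "x \<otimes> y \<in> W"
proof -
  obtain n q n' q' where x: "x = w [^] (n::nat) \<otimes> q" "q \<in> U" and y: "y = w [^] (n'::nat) \<otimes> q'" "q' \<in> U"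
    using assms by (auto simp: W_def)
  have "x \<otimes> y = w [^] n \<otimes> (q \<otimes> w [^] n') \<otimes> q'"
    unfolding x y using x y U_carrier by (simp add: m_assoc)
  also have "\<dots> = w [^] (n + n') \<otimes> (q \<otimes> q')"
    using U_commute[OF x(2), of "w [^] n'"] x y U_carrier by (simp add: m_assoc nat_pow_mult[symmetric])
  finally show ?thesis using U_mult[OF x(2) y(2)] by (auto simp: W_def)
qed

lemma w_in_W: "w \<in> W"
  unfolding W_def using one_in_U by (auto intro!: exI[of _ 1] exI[of _ \<one>])

lemma W_nat_pow: "x \<in> W \<Longrightarrow> x [^] (n::nat) \<in> W"
  by (induction n) (use one_in_U U_subset_W W_mult in auto)

lemma inv_w_in_W: "inv w \<in> W"
proof -
  have "w [^] nat N = w \<otimes> w [^] (nat N - 1)"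
    using nat_pow_Suc2[of w "nat N - 1"] N_gt_1 by (simp add: Suc_diff_le)
  then have "inv w = w [^] (nat N - 1) \<otimes> inv (w [^] nat N)"
    by (simp add: inv_mult_group m_assoc[symmetric])
  then show ?thesis using U_inv[OF w_pow_N_in_U] by (auto simp: W_def)
qed

lemma subgroup_W: "subgroup W S"
proof
  show "W \<subseteq> carrier S" using W_carrier by blast
  show "\<one> \<in> W" using one_in_U U_subset_W by blast
  show "x \<otimes> y \<in> W" if "x \<in> W" "y \<in> W" for x y using W_mult that .
  show "inv x \<in> W" if x_W: "x \<in> W" for x
  proof -
    obtain n q where x: "x = w [^] (n::nat) \<otimes> q" "q \<in> U" using x_W by (auto simp: W_def)
    then have "inv x = inv q \<otimes> inv w [^] n"
      using U_carrier by (simp add: inv_mult_group nat_pow_inv)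
    then show ?thesis
      using U_inv[OF x(2)] U_subset_W W_mult W_nat_pow[OF inv_w_in_W] by auto
  qed
qed

lemma W_conj:
  assumes g: "g \<in> carrier S" and x: "x \<in> W"
  shows "g \<otimes> x \<otimes> inv g \<in> W"
proof -
  obtain n q where x_eq: "x = w [^] (n::nat) \<otimes> q" "q \<in> U" using x by (auto simp: W_def)
  define r where "r = commutator S g w"
  have r: "r \<in> U" using commutator_over_center_in_U(2)[OF w_over_center g] by (simp add: r_def)
  have "g \<otimes> x \<otimes> inv g = (g \<otimes> w [^] n \<otimes> inv g) \<otimes> (g \<otimes> q \<otimes> inv g)"
    unfolding x_eq using conj_mult[OF g, of "w [^] n" q] U_carrier x_eq by simp
  also have "\<dots> = (r \<otimes> w) [^] n \<otimes> q"
    using conj_nat_pow[OF g w_carrier, of n] conj_eq_commutator_mult[OF g w_carrier]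
      kernel_conj[OF U_kernel[OF x_eq(2)] g] by (simp add: r_def)
  also have "\<dots> = w [^] n \<otimes> (r [^] n \<otimes> q)"
    using pow_mult_distrib[of r w n] U_commute[OF r w_carrier] U_commute[OF U_nat_pow[OF r, of n], of "w [^] n"]
      U_carrier[OF r] U_carrier[OF x_eq(2)] by (simp add: m_assoc)
  finally show ?thesis using U_mult[OF U_nat_pow[OF r] x_eq(2)] by (auto simp: W_def)
qed

lemma carrier_induct [consumes 1, case_names s1 s2 over_center mult]:
  assumes y: "y \<in> carrier S"
    and "P s1" and "P s2" and over_center: "\<And>d. over_center d \<Longrightarrow> P d"
    and mult: "\<And>x y. x \<in> carrier S \<Longrightarrow> y \<in> carrier S \<Longrightarrow> P x \<Longrightarrow> P y \<Longrightarrow> P (x \<otimes> y)"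
  shows "P y"
proof -
  have pow: "P (x [^] (n::nat))" if "x \<in> carrier S" "P x" for x n
  proof (induction n)
    case 0
    then show ?case using over_center by (simp add: over_center_def heisenberg_simps)
  next
    case (Suc n)
    then show ?case using mult that by simp
  qed
  obtain a b c k where k: "k \<in> K" and y_eq: "y = s1 [^] (a::nat) \<otimes> s2 [^] (b::nat) \<otimes> w [^] (c::nat) \<otimes> k"
    using carrier_decomp[OF y] by blast
  have "over_center (w [^] c \<otimes> k)"
    using over_center_mult[OF over_center_nat_pow[OF w_over_center] kernel_over_center[OF k]] .
  moreover have "y = s1 [^] a \<otimes> s2 [^] b \<otimes> (w [^] c \<otimes> k)"
    unfolding y_eq using s1_carrier s2_carrier k kernel_carrier by (simp add: m_assoc)
  ultimately show ?thesis
    using mult pow assms(2,3) over_center s1_carrier s2_carrier k kernel_carrier by simp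
qed

lemma commutator_in_W:
  assumes x: "x \<in> carrier S" and y: "y \<in> carrier S"
  shows "commutator S x y \<in> W"
proof -
  have right: "commutator S x' y' \<in> W"
    if x': "x' \<in> carrier S" and "commutator S x' s1 \<in> W" "commutator S x' s2 \<in> W" and y': "y' \<in> carrier S"
    for x' y'
    using y' proof (induction rule: carrier_induct)
    case (over_center d)
    then show ?case using commutator_over_center_in_U(2)[OF _ x'] U_subset_W by blast
  next
    case (mult y1 y2)
    then show ?case using commutator_mult_right[OF x'] W_mult W_conj by simp
  qed (use that in auto)
  have s1: "commutator S s1 z \<in> W" if "z \<in> carrier S" for z
    using right[OF s1_carrier _ _ that] commutator_pow_self[OF s1_carrier, of 1] w_in_W U_subset_W one_in_U
      s1_carrier by (auto simp: w_def)
  have s2: "commutator S s2 z \<in> W" if "z \<in> carrier S" for z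
    using right[OF s2_carrier _ _ that] commutator_pow_self[OF s2_carrier, of 1] inv_w_in_W U_subset_W one_in_U
      inv_commutator[OF s1_carrier s2_carrier] s2_carrier by (auto simp: w_def)
  have "\<forall>z\<in>carrier S. commutator S x z \<in> W"
    using x proof (induction rule: carrier_induct)
    case (over_center d)
    then show ?case using commutator_over_center_in_U(1) U_subset_W by blast
  next
    case (mult x1 x2)
    then show ?case using commutator_mult_left[OF mult(1,2)] W_mult W_conj by simp
  qed (use s1 s2 in auto)
  then show ?thesis using y by blast
qed

lemma derived_subset_W: "derived S (carrier S) \<subseteq> W"
  unfolding derived_def
  by (rule generate_subgroup_incl[OF _ subgroup_W]) (auto simp: commutator_in_W[unfolded commutator_def])

lemma kernel_subset_U: "K \<subseteq> U"
proof
  fix k assume k: "k \<in> K"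
  then have "k \<in> W" using stem derived_subset_W by (auto simp: stem_extension_def)
  then obtain n q where k_eq: "k = w [^] (n::nat) \<otimes> q" and q: "q \<in> U" by (auto simp: W_def)
  have "\<pi> k = (0, 0, int n mod N) \<otimes>\<^bsub>H\<^esub> (0, 0, 0)"
    using k_eq w_image U_carrier[OF q] U_kernel[OF q]
    by (simp add: kernel_iff \<pi>.hom_nat_pow heisenberg_pow_generators)
  then have "int n mod N = 0" using k by (simp add: kernel_iff heisenberg_simps)
  then have "int (nat N) dvd int n" using N_gt_1 by (simp add: dvd_eq_mod_eq_0)
  then obtain t where "n = nat N * t" by (metis int_dvd_int_iff dvd_def)
  then have "w [^] n \<in> U"
    using U_nat_pow[OF w_pow_N_in_U] by (simp add: nat_pow_pow)
  then show "k \<in> U" using k_eq q U_mult by simp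
qed

lemma card_kernel_le: "card K \<le> nat N * nat N"
proof -
  have "card K \<le> card ((\<lambda>(i, j). u [^] i \<otimes> v [^] j) ` ({..<nat N} \<times> {..<nat N}))"
    using kernel_subset_U U_subset_bounded_powers by (intro card_mono) auto
  also have "\<dots> \<le> card ({..<nat N} \<times> {..<nat N})"
    by (rule card_image_le) simp
  finally show ?thesis by (simp add: card_cartesian_product)
qed

end

lemma card_kernel_heisenberg_stem_le:
  assumes "stem_extension S (heisenberg N) \<pi>" "N > 1"
  shows "card (kernel S (heisenberg N) \<pi>) \<le> nat N * nat N"
proof -
  interpret heisenberg_stem S \<pi> N
    using assms by (simp add: heisenberg_stem_def heisenberg_stem_axioms_def stem_extension_def)
  have "(1, 0, 0) \<in> carrier H" "(0, 1, 0) \<in> carrier H" using N_gt_1 by (auto simp: heisenberg_simps)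
  then obtain s1 s2 where "s1 \<in> carrier S" "\<pi> s1 = (1, 0, 0)" "s2 \<in> carrier S" "\<pi> s2 = (0, 1, 0)"
    using lift_exists by metis
  then interpret heisenberg_stem_generators S \<pi> N s1 s2
    by unfold_locales
  show ?thesis using card_kernel_le .
qed

section \<open>A stem extension with kernel of order N squared\<close>

text \<open>Elements are \<open>(a, b, x, z, t)\<close>: \<open>(a, b, x)\<close> is the image in the Heisenberg group and
  \<open>(z, t)\<close> the central kernel, which records the commutators of the lift of \<open>(0, 0, 1)\<close> with
  those of \<open>(1, 0, 0)\<close> and \<open>(0, 1, 0)\<close>.\<close>

definition heisenberg_cover :: "int \<Rightarrow> (int \<times> int \<times> int \<times> int \<times> int) monoid" where
  "heisenberg_cover N = \<lparr> carrier = {0..<N} \<times> {0..<N} \<times> {0..<N} \<times> {0..<N} \<times> {0..<N},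
     monoid.mult = (\<lambda>(a, b, x, z, t) (a', b', x', z', t').
        ((a + a') mod N, (b + b') mod N, (x + x' + a * b') mod N,
         (z + z' + a * (a' * b' - x') + x * a') mod N, (t + t' + b * x' + (a * b - x) * b') mod N)),
     monoid.one = (0, 0, 0, 0, 0) \<rparr>"

definition heisenberg_cover_proj :: "int \<times> int \<times> int \<times> int \<times> int \<Rightarrow> int \<times> int \<times> int" where
  "heisenberg_cover_proj g = (case g of (a, b, x, z, t) \<Rightarrow> (a, b, x))"

lemma heisenberg_cover_simps:
  "carrier (heisenberg_cover N) = {0..<N} \<times> {0..<N} \<times> {0..<N} \<times> {0..<N} \<times> {0..<N}"
  "\<one>\<^bsub>heisenberg_cover N\<^esub> = (0, 0, 0, 0, 0)"
  "(a, b, x, z, t) \<otimes>\<^bsub>heisenberg_cover N\<^esub> (a', b', x', z', t') =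
        ((a + a') mod N, (b + b') mod N, (x + x' + a * b') mod N,
         (z + z' + a * (a' * b' - x') + x * a') mod N, (t + t' + b * x' + (a * b - x) * b') mod N)"
  by (simp_all add: heisenberg_cover_def)

lemma heisenberg_cover_inverse:
  "((- a) mod N, (- b) mod N, (a * b - x) mod N, (- z) mod N, (- t) mod N) \<otimes>\<^bsub>heisenberg_cover N\<^esub> (a, b, x, z, t)
     = \<one>\<^bsub>heisenberg_cover N\<^esub>"
  unfolding heisenberg_cover_simps prod.case
  by (intro conjI prod_eqI; simp only: fst_conv snd_conv;
      rule mod_eq_0I_multiple, simp only: mod_eq_div_form[of _ N], algebra)

lemma heisenberg_cover_group:
  assumes "(N::int) > 0"
  shows "group (heisenberg_cover N)"
proof (rule groupI)
  fix g h assume "g \<in> carrier (heisenberg_cover N)" "h \<in> carrier (heisenberg_cover N)"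
  then show "g \<otimes>\<^bsub>heisenberg_cover N\<^esub> h \<in> carrier (heisenberg_cover N)"
    using assms by (cases g, cases h) (auto simp: heisenberg_cover_simps)
next
  show "\<one>\<^bsub>heisenberg_cover N\<^esub> \<in> carrier (heisenberg_cover N)"
    using assms by (simp add: heisenberg_cover_simps)
next
  fix g h k :: "int \<times> int \<times> int \<times> int \<times> int"
  obtain a b x z t a' b' x' z' t' a'' b'' x'' z'' t''
    where ghk: "g = (a, b, x, z, t)" "h = (a', b', x', z', t')" "k = (a'', b'', x'', z'', t'')"
    by (cases g, cases h, cases k) auto
  show "g \<otimes>\<^bsub>heisenberg_cover N\<^esub> h \<otimes>\<^bsub>heisenberg_cover N\<^esub> k
      = g \<otimes>\<^bsub>heisenberg_cover N\<^esub> (h \<otimes>\<^bsub>heisenberg_cover N\<^esub> k)"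
    unfolding ghk heisenberg_cover_simps prod.case
    by (intro conjI prod_eqI; simp only: fst_conv snd_conv;
        rule mod_eqI_multiple, simp only: mod_eq_div_form[of _ N], algebra)
next
  fix g assume "g \<in> carrier (heisenberg_cover N)"
  then show "\<one>\<^bsub>heisenberg_cover N\<^esub> \<otimes>\<^bsub>heisenberg_cover N\<^esub> g = g"
    by (cases g) (auto simp: heisenberg_cover_simps)
next
  fix g assume "g \<in> carrier (heisenberg_cover N)"
  obtain a b x z t where "g = (a, b, x, z, t)" by (cases g)
  moreover have "((- a) mod N, (- b) mod N, (a * b - x) mod N, (- z) mod N, (- t) mod N) \<in> carrier (heisenberg_cover N)"
    using assms by (simp add: heisenberg_cover_simps)
  ultimately show "\<exists>h\<in>carrier (heisenberg_cover N). h \<otimes>\<^bsub>heisenberg_cover N\<^esub> g = \<one>\<^bsub>heisenberg_cover N\<^esub>"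
    using heisenberg_cover_inverse by blast
qed

lemma heisenberg_cover_inv:
  assumes "(N::int) > 0" and "(a, b, x, z, t) \<in> carrier (heisenberg_cover N)"
  shows "inv\<^bsub>heisenberg_cover N\<^esub> (a, b, x, z, t)
           = ((- a) mod N, (- b) mod N, (a * b - x) mod N, (- z) mod N, (- t) mod N)"
proof -
  interpret group "heisenberg_cover N" using heisenberg_cover_group[OF assms(1)] .
  show ?thesis
    using inv_equality[OF heisenberg_cover_inverse assms(2)] assms(1) by (simp add: heisenberg_cover_simps)
qed

lemma heisenberg_cover_kernel:
  "kernel (heisenberg_cover N) (heisenberg N) heisenberg_cover_proj = (\<lambda>(z, t). (0, 0, 0, z, t)) ` ({0..<N} \<times> {0..<N})"
  by (auto simp: kernel_def heisenberg_cover_simps heisenberg_simps heisenberg_cover_proj_def image_iff)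

lemma card_heisenberg_cover_kernel:
  "card (kernel (heisenberg_cover N) (heisenberg N) heisenberg_cover_proj) = nat N * nat N"
proof -
  have "inj_on (\<lambda>(z, t). (0::int, 0::int, 0::int, z::int, t::int)) ({0..<N} \<times> {0..<N})"
    by (auto simp: inj_on_def)
  then have "card ((\<lambda>(z, t). (0::int, 0::int, 0::int, z, t)) ` ({0..<N} \<times> {0..<N})) = card ({0..<N} \<times> {0..<N::int})"
    by (rule card_image)
  then show ?thesis unfolding heisenberg_cover_kernel by (simp add: card_cartesian_product)
qed

text \<open>This is where oddness of \<open>N\<close> enters: \<open>h = (N + 1) / 2\<close> inverts \<open>2\<close> modulo \<open>N\<close>.\<close>

lemma heisenberg_cover_commutator:
  assumes "(N::int) > 1" and "N + 1 = 2 * h"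
    and "0 \<le> z" "z < N" "0 \<le> t" "t < N"
  shows "commutator (heisenberg_cover N) (0, 0, 1, 0, 0) ((z * h) mod N, ((- t) * h) mod N, 0, 0, 0) = (0, 0, 0, z, t)"
proof -
  have N_pos: "N > 0" using assms(1) by simp
  have carrier: "(0, 0, 1, 0, 0) \<in> carrier (heisenberg_cover N)"
    "((z * h) mod N, ((- t) * h) mod N, 0, 0, 0) \<in> carrier (heisenberg_cover N)"
    using assms(1) by (simp_all add: heisenberg_cover_simps)
  show ?thesis
    unfolding commutator_def heisenberg_cover_inv[OF N_pos carrier(1)] heisenberg_cover_inv[OF N_pos carrier(2)]
      heisenberg_cover_simps prod.case
    apply (intro conjI prod_eqI; simp only: fst_conv snd_conv)
        apply (rule mod_eq_0I_multiple, simp only: mod_eq_div_form[of _ N], algebra)+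
     apply (rule mod_eq_residueI[OF assms(3,4)], simp only: mod_eq_div_form[of _ N])
     using assms(2) apply algebra
    apply (rule mod_eq_residueI[OF assms(5,6)], simp only: mod_eq_div_form[of _ N])
    using assms(2) apply algebra
    done
qed

lemma heisenberg_cover_stem:
  assumes "(N::int) > 1" and "odd N"
  shows "stem_extension (heisenberg_cover N) (heisenberg N) heisenberg_cover_proj"
proof -
  let ?C = "heisenberg_cover N"
  have "heisenberg_cover_proj \<in> hom ?C (heisenberg N)"
    by (rule homI) (auto simp: heisenberg_cover_simps heisenberg_simps heisenberg_cover_proj_def)
  moreover have "heisenberg_cover_proj ` carrier ?C = carrier (heisenberg N)"
  proof -
    have "(a, b, x) = heisenberg_cover_proj (a, b, x, 0, 0)" for a b x
      by (simp add: heisenberg_cover_proj_def)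
    then show ?thesis
      using assms(1)
      by (force simp: heisenberg_cover_simps heisenberg_simps heisenberg_cover_proj_def)
  qed
  moreover have "k \<in> group_center ?C \<inter> derived ?C (carrier ?C)"
    if k_kernel: "k \<in> kernel ?C (heisenberg N) heisenberg_cover_proj" for k
  proof -
    obtain z t where k: "k = (0, 0, 0, z, t)" and zt: "0 \<le> z" "z < N" "0 \<le> t" "t < N"
      using k_kernel unfolding heisenberg_cover_kernel by auto
    obtain h where h: "N + 1 = 2 * h" using assms(2) by (metis odd_even_add odd_one evenE)
    have k_carrier: "k \<in> carrier ?C" using k zt by (simp add: heisenberg_cover_simps)
    have factors: "(0, 0, 1, 0, 0) \<in> carrier ?C" "((z * h) mod N, ((- t) * h) mod N, 0, 0, 0) \<in> carrier ?C"
      using assms(1) by (simp_all add: heisenberg_cover_simps)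
    have "k \<in> group_center ?C"
      using k_carrier unfolding group_center_def k
      by (auto simp: heisenberg_cover_simps algebra_simps)
    moreover have "k \<in> derived ?C (carrier ?C)"
      using factors heisenberg_cover_commutator[OF assms(1) h zt] unfolding k commutator_def derived_def
      by (blast intro: generate.incl)
    ultimately show ?thesis by blast
  qed
  ultimately show ?thesis
    using heisenberg_cover_group assms(1) by (auto simp: stem_extension_def epi_def)
qed

lemma heisenberg_cover_commute_with_central:
  assumes "(0, 0, c, z, t) \<otimes>\<^bsub>heisenberg_cover N\<^esub> (a', b', x', z', t')
         = (a', b', x', z', t') \<otimes>\<^bsub>heisenberg_cover N\<^esub> (0, 0, c, z, t)"
  shows "N dvd 2 * c * a' \<and> N dvd 2 * c * b'"
proof -
  have "(z + z' + c * a') mod N = (z' + z - a' * c) mod N"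
    and "(t' + t + b' * c) mod N = (t + t' - c * b') mod N"
    using assms by (simp_all add: heisenberg_cover_simps algebra_simps)
  then have "N dvd (z + z' + c * a') - (z' + z - a' * c)" "N dvd (t' + t + b' * c) - (t + t' - c * b')"
    by (simp_all only: mod_eq_dvd_iff)
  then show ?thesis by (simp_all add: algebra_simps)
qed

section \<open>Copies of groups along injections\<close>

text \<open>Schur covers and deep adjacency quantify over groups with carrier in \<open>nat\<close>, so the cover
  constructed above has to be copied into \<open>nat\<close>.\<close>

definition transport :: "('a \<Rightarrow> 'b) \<Rightarrow> ('a, 'c) monoid_scheme \<Rightarrow> 'b monoid" where
  "transport f T = \<lparr> carrier = f ` carrier T,
     monoid.mult = (\<lambda>x y. f (inv_into (carrier T) f x \<otimes>\<^bsub>T\<^esub> inv_into (carrier T) f y)),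
     monoid.one = f \<one>\<^bsub>T\<^esub> \<rparr>"

lemma transport_iso:
  assumes "monoid T" "inj_on f (carrier T)"
  shows "f \<in> iso T (transport f T)"
  using assms by (auto simp: iso_def hom_def bij_betw_def transport_def monoid.m_closed)

lemma transport_group:
  assumes "group T" "inj_on f (carrier T)"
  shows "group (transport f T)"
proof -
  have iso: "f \<in> iso T (transport f T)"
    using assms by (simp add: transport_iso group.is_monoid)
  then have "monoid (transport f T)"
    using monoid.hom_imp_img_monoid[OF group.is_monoid[OF assms(1)], of f "transport f T"]
    by (simp add: iso_def transport_def)
  then show ?thesis using group.iso_imp_group[OF assms(1) is_isoI[OF iso]] by simp
qed

lemma (in group) iso_commute_iff:
  assumes "\<phi> \<in> iso G G'" "x \<in> carrier G" "y \<in> carrier G"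
  shows "\<phi> x \<otimes>\<^bsub>G'\<^esub> \<phi> y = \<phi> y \<otimes>\<^bsub>G'\<^esub> \<phi> x \<longleftrightarrow> x \<otimes> y = y \<otimes> x"
proof -
  have "\<phi> \<in> hom G G'" using assms(1) by (simp add: iso_def)
  then have "\<phi> x \<otimes>\<^bsub>G'\<^esub> \<phi> y = \<phi> (x \<otimes> y)" "\<phi> y \<otimes>\<^bsub>G'\<^esub> \<phi> x = \<phi> (y \<otimes> x)"
    using assms(2,3) by (simp_all add: hom_mult)
  then show ?thesis
    using assms by (auto simp: iso_def bij_betw_def dest: inj_onD)
qed

lemma (in group) iso_image_group_center:
  assumes "\<phi> \<in> iso G G'"
  shows "\<phi> ` group_center G \<subseteq> group_center G'"
proof (rule image_subsetI)
  fix c assume c: "c \<in> group_center G"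
  have "\<phi> c \<otimes>\<^bsub>G'\<^esub> \<phi> y = \<phi> y \<otimes>\<^bsub>G'\<^esub> \<phi> c" if "y \<in> carrier G" for y
    using iso_commute_iff[OF assms _ that] c that by (auto simp: group_center_def)
  moreover have "carrier G' = \<phi> ` carrier G" using assms by (simp add: iso_def bij_betw_def)
  ultimately show "\<phi> c \<in> group_center G'"
    using c by (auto simp: group_center_def)
qed

lemma stem_extension_iso:
  assumes stem: "stem_extension T G \<pi>" and iso: "\<phi> \<in> iso T T'" and T': "group T'"
  shows "stem_extension T' G (\<pi> \<circ> inv_into (carrier T) \<phi>)"
    and "kernel T' G (\<pi> \<circ> inv_into (carrier T) \<phi>) = \<phi> ` kernel T G \<pi>"
proof -
  interpret T: group T using stem by (simp add: stem_extension_def)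
  let ?\<psi> = "inv_into (carrier T) \<phi>"
  interpret \<phi>: group_hom T T' \<phi>
    using iso T' by (simp add: group_hom_def group_hom_axioms_def iso_def T.group_axioms)
  have bij: "bij_betw \<phi> (carrier T) (carrier T')" using iso by (simp add: iso_def)
  have \<psi>: "?\<psi> \<in> hom T' T" using T.iso_set_sym[OF iso] by (simp add: iso_def)
  have \<pi>: "\<pi> \<in> hom T G" "\<pi> ` carrier T = carrier G"
    using stem by (auto simp: stem_extension_def epi_def image_iff)
  have \<psi>_image: "?\<psi> ` carrier T' = carrier T"
    using bij bij_betw_inv_into bij_betw_imp_surj_on by blast
  show kernel: "kernel T' G (\<pi> \<circ> ?\<psi>) = \<phi> ` kernel T G \<pi>"
  proof (intro equalityI subsetI)
    fix x assume "x \<in> kernel T' G (\<pi> \<circ> ?\<psi>)"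
    then have "x = \<phi> (?\<psi> x)" "?\<psi> x \<in> kernel T G \<pi>"
      using bij by (auto simp: kernel_def bij_betw_def f_inv_into_f inv_into_into)
    then show "x \<in> \<phi> ` kernel T G \<pi>" by blast
  next
    fix x assume "x \<in> \<phi> ` kernel T G \<pi>"
    then show "x \<in> kernel T' G (\<pi> \<circ> ?\<psi>)"
      using bij by (auto simp: kernel_def bij_betw_def)
  qed
  have "\<pi> \<circ> ?\<psi> \<in> hom T' G"
    by (rule homI) (use \<psi> \<pi> in \<open>auto simp: hom_def Pi_iff\<close>)
  moreover have "(\<pi> \<circ> ?\<psi>) ` carrier T' = carrier G"
    using \<pi>(2) \<psi>_image by (metis image_comp)
  ultimately have "\<pi> \<circ> ?\<psi> \<in> epi T' G" by (simp add: epi_def)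
  moreover have "\<phi> ` group_center T \<subseteq> group_center T'"
    using T.iso_image_group_center[OF iso] .
  moreover have "\<phi> ` derived T (carrier T) = derived T' (carrier T')"
    using \<phi>.derived_img[of "carrier T"] bij by (simp add: bij_betw_def)
  ultimately show "stem_extension T' G (\<pi> \<circ> ?\<psi>)"
    using stem T' kernel by (fastforce simp: stem_extension_def)
qed

section \<open>Deep adjacency in the Heisenberg group\<close>

lemma heisenberg_schur_cover:
  assumes "N > 1" "odd N"
  shows "schur_cover (transport to_nat (heisenberg_cover N)) (heisenberg N)
           (heisenberg_cover_proj \<circ> inv_into (carrier (heisenberg_cover N)) to_nat)"
proof -
  let ?C = "heisenberg_cover N"
  have C: "group ?C" using heisenberg_cover_group assms(1) by simp
  have inj: "inj_on to_nat (carrier ?C)" by (simp add: inj_on_def)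
  have iso: "to_nat \<in> iso ?C (transport to_nat ?C)"
    using transport_iso[OF group.is_monoid[OF C] inj] .
  note stem = stem_extension_iso[OF heisenberg_cover_stem[OF assms] iso transport_group[OF C inj]]
  have "card (to_nat ` kernel ?C (heisenberg N) heisenberg_cover_proj) = nat N * nat N"
    using card_heisenberg_cover_kernel by (simp add: card_image inj_on_def)
  then show ?thesis
    using stem card_kernel_heisenberg_stem_le assms(1)
    by (auto simp: schur_cover_def transport_def heisenberg_cover_simps)
qed

lemma deep_adj_imp_cover_commute:
  assumes "N > 1" "odd N" and adj: "deep_adj (heisenberg N) (a, b, c) (a', b', c')"
  shows "(a, b, c, 0, 0) \<otimes>\<^bsub>heisenberg_cover N\<^esub> (a', b', c', 0, 0)
       = (a', b', c', 0, 0) \<otimes>\<^bsub>heisenberg_cover N\<^esub> (a, b, c, 0, 0)"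
proof -
  let ?C = "heisenberg_cover N"
  let ?T = "transport to_nat ?C" and ?\<pi> = "heisenberg_cover_proj \<circ> inv_into (carrier ?C) to_nat"
  have C: "group ?C" using heisenberg_cover_group assms(1) by simp
  have inj: "inj_on to_nat (carrier ?C)" by (simp add: inj_on_def)
  then have iso: "to_nat \<in> iso ?C (transport to_nat ?C)"
    by (rule transport_iso[OF group.is_monoid[OF C]])
  have lifts: "(a, b, c, 0, 0) \<in> carrier ?C" "(a', b', c', 0, 0) \<in> carrier ?C"
    using adj assms(1) by (auto simp: deep_adj_def heisenberg_simps heisenberg_cover_simps)
  have lifts_T: "to_nat g \<in> carrier ?T" "?\<pi> (to_nat g) = heisenberg_cover_proj g" if "g \<in> carrier ?C" for g
    using that inj by (simp_all add: transport_def)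
  have "\<forall>x\<in>carrier ?T. \<forall>y\<in>carrier ?T. ?\<pi> x = (a, b, c) \<and> ?\<pi> y = (a', b', c') \<longrightarrow> x \<otimes>\<^bsub>?T\<^esub> y = y \<otimes>\<^bsub>?T\<^esub> x"
    using adj heisenberg_schur_cover[OF assms(1,2)] unfolding deep_adj_def by blast
  moreover have "?\<pi> (to_nat (a, b, c, 0::int, 0::int)) = (a, b, c)" "?\<pi> (to_nat (a', b', c', 0::int, 0::int)) = (a', b', c')"
    using lifts_T(2) lifts by (simp_all add: heisenberg_cover_proj_def)
  ultimately have "to_nat (a, b, c, 0::int, 0::int) \<otimes>\<^bsub>?T\<^esub> to_nat (a', b', c', 0::int, 0::int)
      = to_nat (a', b', c', 0::int, 0::int) \<otimes>\<^bsub>?T\<^esub> to_nat (a, b, c, 0::int, 0::int)"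
    using lifts_T(1) lifts by blast
  then show ?thesis using group.iso_commute_iff[OF C iso lifts] by simp
qed

lemma deep_adj_heisenberg_imp_commute:
  assumes "N > 1" "odd N" "deep_adj (heisenberg N) x y"
  shows "x \<otimes>\<^bsub>heisenberg N\<^esub> y = y \<otimes>\<^bsub>heisenberg N\<^esub> x"
  using deep_adj_imp_cover_commute[of N "fst x" "fst (snd x)" "snd (snd x)" "fst y" "fst (snd y)" "snd (snd y)"] assms
  by (cases x, cases y) (simp add: heisenberg_cover_simps heisenberg_simps)

lemma deep_adj_heisenberg_central_imp_dvd:
  assumes "N > 1" "odd N" "deep_adj (heisenberg N) (0, 0, c) (a', b', c')"
  shows "N dvd 2 * c * a' \<and> N dvd 2 * c * b'"
  using heisenberg_cover_commute_with_central deep_adj_imp_cover_commute[OF assms] by blast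

lemma schur_cover_heisenberg_stem:
  "schur_cover T (heisenberg N) \<pi> \<Longrightarrow> N > 1 \<Longrightarrow> heisenberg_stem T \<pi> N"
  by (simp add: schur_cover_def stem_extension_def heisenberg_stem_def heisenberg_stem_axioms_def)

lemma deep_adj_heisenberg_central_power:
  assumes "N > 1" "y = (a, b, c)" "y \<in> carrier (heisenberg N)" "y \<noteq> (0, 0, int M mod N)"
    and "(int M * a) mod N = 0" "(int M * b) mod N = 0"
  shows "deep_adj (heisenberg N) (0, 0, int M mod N) y"
  unfolding deep_adj_def
proof (intro conjI allI impI ballI)
  show "(0, 0, int M mod N) \<in> carrier (heisenberg N)" using assms(1) by (simp add: heisenberg_simps)
next
  fix T :: "nat monoid" and \<pi> h g
  assume cover: "schur_cover T (heisenberg N) \<pi>" and "h \<in> carrier T" "g \<in> carrier T"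
    and "\<pi> h = (0, 0, int M mod N) \<and> \<pi> g = y"
  then show "h \<otimes>\<^bsub>T\<^esub> g = g \<otimes>\<^bsub>T\<^esub> h"
    using heisenberg_stem.lifts_commute_if_central_power[OF schur_cover_heisenberg_stem[OF cover assms(1)]]
      assms(2,5,6) by simp
qed (use assms in auto)

lemma deep_adj_heisenberg_power:
  assumes "N > 1" "x \<in> carrier (heisenberg N)" "x \<noteq> x [^]\<^bsub>heisenberg N\<^esub> (n::nat)"
  shows "deep_adj (heisenberg N) x (x [^]\<^bsub>heisenberg N\<^esub> n)"
  unfolding deep_adj_def
proof (intro conjI allI impI ballI)
  show "x [^]\<^bsub>heisenberg N\<^esub> n \<in> carrier (heisenberg N)"
    using assms monoid.nat_pow_closed[OF group.is_monoid[OF heisenberg_group]] by simp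
next
  fix T :: "nat monoid" and \<pi> a b
  assume cover: "schur_cover T (heisenberg N) \<pi>" and "a \<in> carrier T" "b \<in> carrier T"
    and "\<pi> a = x \<and> \<pi> b = x [^]\<^bsub>heisenberg N\<^esub> n"
  then show "a \<otimes>\<^bsub>T\<^esub> b = b \<otimes>\<^bsub>T\<^esub> a"
    by (intro heisenberg_stem.lifts_commute_if_power[OF schur_cover_heisenberg_stem[OF cover assms(1)], of _ _ n])
      auto
qed (use assms in auto)

section \<open>Connectivity of the reduced deep commuting graph\<close>

lemma deep_adj_sym: "deep_adj G x y \<Longrightarrow> deep_adj G y x"
  unfolding deep_adj_def by metis

lemma reduced_vertices_iff: "x \<in> reduced_vertices V E \<longleftrightarrow> x \<in> V \<and> (\<exists>w\<in>V. w \<noteq> x \<and> \<not> E x w)"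
  by (auto simp: reduced_vertices_def dominant_vertices_def)

abbreviation induced_edge :: "'a set \<Rightarrow> ('a \<Rightarrow> 'a \<Rightarrow> bool) \<Rightarrow> 'a \<Rightarrow> 'a \<Rightarrow> bool" where
  "induced_edge V E \<equiv> \<lambda>u v. u \<in> V \<and> v \<in> V \<and> E u v"

lemma graph_connected_if_hub:
  assumes "z \<in> V" and sym: "\<And>u v. E u v \<Longrightarrow> E v u"
    and reach: "\<And>x. x \<in> V \<Longrightarrow> (induced_edge V E)\<^sup>*\<^sup>* x z"
  shows "graph_connected V E"
proof -
  have symp: "symp (induced_edge V E)\<^sup>*\<^sup>*" using sym by (intro symp_rtranclp) (auto intro: sympI)
  have "(induced_edge V E)\<^sup>*\<^sup>* x y" if "x \<in> V" "y \<in> V" for x y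
    using rtranclp_trans[OF reach[OF that(1)] sympD[OF symp reach[OF that(2)]]] .
  then show ?thesis using assms(1) by (auto simp: graph_connected_def)
qed

lemma not_graph_connected_if_closed:
  assumes "x \<in> V" "y \<in> V" "P x" "\<not> P y"
    and closed: "\<And>u v. u \<in> V \<Longrightarrow> v \<in> V \<Longrightarrow> E u v \<Longrightarrow> P u \<Longrightarrow> P v"
  shows "\<not> graph_connected V E"
proof
  assume "graph_connected V E"
  then have "(induced_edge V E)\<^sup>*\<^sup>* x y"
    using assms(1,2) by (simp add: graph_connected_def)
  then have "P y" by (induction rule: rtranclp_induct) (use assms(3) closed in auto)
  then show False using assms(4) by simp
qed

abbreviation heisenberg_reduced :: "int \<Rightarrow> (int \<times> int \<times> int) set" where
  "heisenberg_reduced N \<equiv> reduced_vertices (carrier (heisenberg N)) (deep_adj (heisenberg N))"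

lemma identity_not_heisenberg_reduced:
  assumes "N > 1"
  shows "(0, 0, 0) \<notin> heisenberg_reduced N"
proof -
  have "deep_adj (heisenberg N) (0, 0, 0) y" if "y \<in> carrier (heisenberg N)" "y \<noteq> (0, 0, 0)" for y
    using deep_adj_heisenberg_central_power[OF assms, of y "fst y" "fst (snd y)" "snd (snd y)" 0] that by simp
  then show ?thesis unfolding reduced_vertices_iff by blast
qed

lemma heisenberg_reduced_if_noncommuting:
  assumes "N > 1" "odd N" "x \<in> carrier (heisenberg N)" "y \<in> carrier (heisenberg N)"
    and "x \<otimes>\<^bsub>heisenberg N\<^esub> y \<noteq> y \<otimes>\<^bsub>heisenberg N\<^esub> x"
  shows "x \<in> heisenberg_reduced N"
proof -
  have "y \<noteq> x" "\<not> deep_adj (heisenberg N) x y"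
    using assms deep_adj_heisenberg_imp_commute[OF assms(1,2), of x y] by auto
  then show ?thesis unfolding reduced_vertices_iff using assms(3,4) by blast
qed

lemma generator_heisenberg_reduced:
  assumes "N > 1" "odd N"
  shows "(1, 0, 0) \<in> heisenberg_reduced N"
  using heisenberg_reduced_if_noncommuting[OF assms, of "(1, 0, 0)" "(0, 1, 0)"] assms(1)
  by (simp add: heisenberg_simps)

lemma heisenberg_prime_reduced_graph_disconnected:
  assumes p: "prime p" "odd p"
  shows "\<not> graph_connected (heisenberg_reduced (int p)) (deep_adj (heisenberg (int p)))"
proof -
  have N: "int p > 1" "odd (int p)" using p prime_gt_1_nat by auto
  have "p \<noteq> 2" using p(2) by auto
  then have "\<not> int p dvd 2"
    using p(1) by (metis int_dvd_int_iff of_nat_numeral primes_dvd_imp_eq two_is_prime_nat)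
  then have "\<not> deep_adj (heisenberg (int p)) (0, 0, 1) (1, 0, 0)"
    using deep_adj_heisenberg_central_imp_dvd[OF N, of 1 1 0 0] by auto
  moreover have "(0, 0, 1) \<in> carrier (heisenberg (int p))" "(1, 0, 0) \<in> carrier (heisenberg (int p))"
    "(1, 0, 0) \<noteq> (0, 0, 1::int)"
    using N(1) by (simp_all add: heisenberg_simps)
  ultimately have center_reduced: "(0, 0, 1) \<in> heisenberg_reduced (int p)"
    unfolding reduced_vertices_iff by blast
  show ?thesis
  proof (rule not_graph_connected_if_closed[OF center_reduced generator_heisenberg_reduced[OF N],
        where P = "\<lambda>v. fst v = 0 \<and> fst (snd v) = 0"])
    fix u v
    assume u: "u \<in> heisenberg_reduced (int p)" and v: "v \<in> heisenberg_reduced (int p)"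
      and adj: "deep_adj (heisenberg (int p)) u v" and "fst u = 0 \<and> fst (snd u) = 0"
    then obtain c a' b' c' where uv: "u = (0, 0, c)" "v = (a', b', c')" by (metis prod.collapse)
    have "0 < c" "c < int p" "0 \<le> a'" "a' < int p" "0 \<le> b'" "b' < int p"
      using u v identity_not_heisenberg_reduced[OF N(1)] uv
      by (auto simp: reduced_vertices_iff heisenberg_simps le_less)
    then have "\<not> int p dvd 2 * c" using \<open>\<not> int p dvd 2\<close> p(1)
      by (auto simp: prime_dvd_mult_iff dest: zdvd_imp_le)
    then have "int p dvd a'" "int p dvd b'"
      using deep_adj_heisenberg_central_imp_dvd[OF N adj[unfolded uv]] p(1) by (auto simp: prime_dvd_mult_iff)
    then show "fst v = 0 \<and> fst (snd v) = 0"
      using uv \<open>0 \<le> a'\<close> \<open>a' < int p\<close> \<open>0 \<le> b'\<close> \<open>b' < int p\<close> residue_eq_0_if_dvd by simp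
  qed simp_all
qed

lemma heisenberg_reduced_reaches_central_if_dvd:
  assumes "N > 1" and N_eq: "N = int p * int M"
    and z: "(0, 0, int M mod N) \<in> heisenberg_reduced N"
    and y: "y \<in> heisenberg_reduced N" "y = (a, b, c)" and "int p dvd a" "int p dvd b"
  shows "(induced_edge (heisenberg_reduced N) (deep_adj (heisenberg N)))\<^sup>*\<^sup>* y (0, 0, int M mod N)"
proof (cases "y = (0, 0, int M mod N)")
  case False
  have "(int M * a) mod N = 0" "(int M * b) mod N = 0"
    using \<open>int p dvd a\<close> \<open>int p dvd b\<close> N_eq by (auto simp: mult.commute mult.left_commute)
  then have "deep_adj (heisenberg N) y (0, 0, int M mod N)"
    using deep_adj_sym[OF deep_adj_heisenberg_central_power[OF assms(1) y(2)]] y False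
    by (simp add: reduced_vertices_iff)
  with y z show ?thesis by (intro r_into_rtranclp) simp
qed simp

text \<open>A vertex whose first two coordinates are not both divisible by \<open>p\<close> reaches \<open>(0, 0, M)\<close>
  through its \<open>p\<close>-th power, whose first two coordinates are divisible by \<open>p\<close> but not both zero.\<close>

lemma heisenberg_reduced_reaches_central:
  assumes N: "N > 1" "odd N" and N_eq: "N = int p * int M" and "p > 0" and "int p dvd int M"
    and z: "(0, 0, int M mod N) \<in> heisenberg_reduced N" and x: "x \<in> heisenberg_reduced N"
  shows "(induced_edge (heisenberg_reduced N) (deep_adj (heisenberg N)))\<^sup>*\<^sup>* x (0, 0, int M mod N)"
proof -
  obtain a b c where x_eq: "x = (a, b, c)" by (metis prod.collapse)
  have x_carrier: "x \<in> carrier (heisenberg N)" using x by (simp add: reduced_vertices_iff)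
  show ?thesis
  proof (cases "int p dvd a \<and> int p dvd b")
    case True
    then show ?thesis using heisenberg_reduced_reaches_central_if_dvd[OF N(1) N_eq z x x_eq] by simp
  next
    case False
    define y where "y = x [^]\<^bsub>heisenberg N\<^esub> p"
    obtain c' where y_eq: "y = ((int p * a) mod N, (int p * b) mod N, c')"
      using heisenberg_pow_fst_snd[where x = x and N = N and n = p] x_eq
      by (simp add: y_def) (metis prod.collapse)
    have y_carrier: "y \<in> carrier (heisenberg N)"
      using x_carrier monoid.nat_pow_closed[OF group.is_monoid[OF heisenberg_group]] N(1) by (simp add: y_def)
    have "int p dvd e" if "(int p * e) mod N = 0" for e
    proof -
      have "int M dvd e" using that N_eq \<open>p > 0\<close> by (simp add: dvd_eq_mod_eq_0[symmetric])
      then show ?thesis using \<open>int p dvd int M\<close> by (rule dvd_trans[rotated])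
    qed
    then have "(int p * a) mod N \<noteq> 0 \<or> (int p * b) mod N \<noteq> 0"
      using False by auto
    then have y_reduced: "y \<in> heisenberg_reduced N"
      using heisenberg_reduced_if_noncommuting[OF N y_carrier, of "(0, 1, 0)"]
        heisenberg_reduced_if_noncommuting[OF N y_carrier, of "(1, 0, 0)"]
        heisenberg_commute_generators[of "(int p * a) mod N" "(int p * b) mod N" c' N] y_carrier y_eq N(1)
      by (auto simp: heisenberg_simps)
    have path_xy: "(induced_edge (heisenberg_reduced N) (deep_adj (heisenberg N)))\<^sup>*\<^sup>* x y"
    proof (cases "x = y")
      case False
      then have "deep_adj (heisenberg N) x y"
        using deep_adj_heisenberg_power[OF N(1) x_carrier, of p] by (simp add: y_def)
      with x y_reduced show ?thesis by (intro r_into_rtranclp) simp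
    qed simp
    have "int p dvd (int p * a) mod N" "int p dvd (int p * b) mod N"
      using N_eq by (simp_all add: dvd_mod)
    then have "(induced_edge (heisenberg_reduced N) (deep_adj (heisenberg N)))\<^sup>*\<^sup>* y (0, 0, int M mod N)"
      by (rule heisenberg_reduced_reaches_central_if_dvd[OF N(1) N_eq z y_reduced y_eq])
    with path_xy show ?thesis by (rule rtranclp_trans)
  qed
qed

lemma heisenberg_prime_power_reduced_graph_connected:
  assumes p: "prime p" "odd p" and k: "k \<ge> 2"
  shows "graph_connected (heisenberg_reduced (int p ^ k)) (deep_adj (heisenberg (int p ^ k)))"
proof -
  define N where "N = int p ^ k"
  define M where "M = p ^ (k - 1)"
  have "p \<noteq> 2" using p(2) by auto
  then have "p \<ge> 3" using prime_ge_2_nat[OF p(1)] by linarith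
  have N_eq: "N = int p * int M"
    using k by (cases k) (simp_all add: N_def M_def)
  have "int p dvd int M" using k by (simp add: M_def)
  have M_bounds: "0 < int M" "2 * int M < N"
    using \<open>p \<ge> 3\<close> N_eq by (simp_all add: M_def)
  have N: "N > 1" "odd N" using M_bounds p(2) by (simp_all add: N_def)
  have "\<not> N dvd 2 * int M"
    using M_bounds by (auto dest: zdvd_imp_le)
  then have "\<not> deep_adj (heisenberg N) (0, 0, int M mod N) (1, 0, 0)"
    using deep_adj_heisenberg_central_imp_dvd[OF N, of "int M mod N" 1 0 0] M_bounds by auto
  moreover have "(0, 0, int M mod N) \<in> carrier (heisenberg N)" "(1, 0, 0) \<in> carrier (heisenberg N)"
    "(1::int, 0::int, 0) \<noteq> (0, 0, int M mod N)"
    using N(1) by (simp_all add: heisenberg_simps)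
  ultimately have "(0, 0, int M mod N) \<in> heisenberg_reduced N"
    unfolding reduced_vertices_iff by blast
  then have "graph_connected (heisenberg_reduced N) (deep_adj (heisenberg N))"
    using heisenberg_reduced_reaches_central[OF N N_eq prime_gt_0_nat[OF p(1)] \<open>int p dvd int M\<close>]
    by (intro graph_connected_if_hub[OF _ deep_adj_sym])
  then show ?thesis by (simp add: N_def)
qed

theorem proposition5p6:
  fixes p k :: nat
  assumes "prime p" and "odd p" and "k \<ge> 1"
  shows "(\<not> graph_connected
            (reduced_vertices (carrier (heisenberg (int p ^ k))) (deep_adj (heisenberg (int p ^ k))))
            (deep_adj (heisenberg (int p ^ k))))
         \<longleftrightarrow> k = 1"
proof (cases "k = 1")
  case True
  then show ?thesis using heisenberg_prime_reduced_graph_disconnected assms by simp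
next
  case False
  then show ?thesis using heisenberg_prime_power_reduced_graph_connected assms by simp
qed

end
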